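(* The set of partitions whose odd parts all have multiplicity at most $1$ (Schröder partitions) is exactly the set of partitions $\lambda$ with $c_2(c_2(\lambda))=\lambda$.
   Context: For a partition $\lambda$, let $\lambda'_j=\#\{t:\lambda_t\ge j\}$ be the length of the $j$-th column of its Young shape. For a positive integer $n$, $c_n(\lambda)$ is the partition whose $i$-th part is $\sum_{j=(i-1)n+1}^{in}\lambda'_j$ (zero parts omitted), i.e. the total number of cells in columns $(i-1)n+1,\dots,in$ of $\lambda$. *)

theory Defs
  imports Main
begin

definition is_partition :: "nat list \<Rightarrow> bool" where
  "is_partition lam \<longleftrightarrow> sorted_wrt (\<ge>) lam \<and> (\<forall>x\<in>set lam. 0 < x)"

definition col :: "nat list \<Rightarrow> nat \<Rightarrow> nat" where
  "col lam j = length (filter (\<lambda>x. j \<le> x) lam)"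

text \<open>Indices i beyond sum_list lam
  contribute only zero parts (for n >= 1), so ranging i over that bound suffices.\<close>
definition cn :: "nat \<Rightarrow> nat list \<Rightarrow> nat list" where
  "cn n lam = filter (\<lambda>x. 0 < x)
     (map (\<lambda>i. \<Sum>j\<in>{(i - 1) * n + 1 .. i * n}. col lam j) [1..<Suc (sum_list lam)])"

definition schroeder :: "nat list \<Rightarrow> bool" where
  "schroeder lam \<longleftrightarrow> (\<forall>k. odd k \<longrightarrow> count_list lam k \<le> 1)"

end

theory Submission
  imports Defs "HOL-Library.More_List"
begin

text \<open>Index parts and columns from 0, so that the parts of \<open>c_2(\<lambda>)\<close> are the column pair
  sums \<open>\<lambda>'(2i+1) + \<lambda>'(2i+2)\<close>, while \<open>\<lambda>'(2i+1) - \<lambda>'(2i+2)\<close> is the multiplicity of the odd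
  part \<open>2i+1\<close>. For a Schroeder partition this difference is at most one, hence
  \<open>2k+1 \<le> \<lambda>'(2i+1) + \<lambda>'(2i+2)\<close> iff \<open>k < \<lambda>'(2i+1)\<close> iff \<open>2i+1 \<le> \<lambda>(k)\<close>, and likewise for
  \<open>2k+2\<close>; counting such \<open>i\<close> shows that the column pair sums of \<open>c_2(\<lambda>)\<close> give back \<open>\<lambda>\<close>.
  Conversely every \<open>c_2(\<mu>)\<close> is Schroeder: its parts decrease weakly, so two equal parts in
  positions \<open>a < b\<close> squeeze \<open>\<mu>'(2a+1) = \<mu>'(2a+2)\<close> and the repeated part is even.\<close>

lemma col_eq_0_beyond_sum: "sum_list lam < j \<Longrightarrow> col lam j = 0"
  unfolding col_def using member_le_sum_list[of _ lam]
  by (auto simp: filter_empty_conv) (meson leD le_trans)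

lemma col_eq_col_Suc_plus_count: "col lam j = col lam (Suc j) + count_list lam j"
  unfolding col_def by (induction lam) auto

lemma col_antimono: "j \<le> j' \<Longrightarrow> col lam j' \<le> col lam j"
  unfolding col_def by (induction lam) auto

lemma less_col_iff:
  assumes "sorted_wrt (\<ge>) lam" "0 < j"
  shows "k < col lam j \<longleftrightarrow> j \<le> nth_default 0 lam k"
  using assms(1)
proof (induction lam arbitrary: k)
  case Nil
  then show ?case using assms(2) by (simp add: col_def)
next
  case (Cons x xs)
  show ?case
  proof (cases "j \<le> x")
    case True
    then have "col (x # xs) j = Suc (col xs j)" by (simp add: col_def)
    then show ?thesis using Cons True by (cases k) auto
  next
    case False
    with Cons.prems have "\<forall>y\<in>set (x # xs). y < j" by auto
    then have "col (x # xs) j = 0" "nth_default 0 (x # xs) k < j"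
      using assms(2) nth_mem[of k "x # xs"]
      by (auto simp: col_def filter_empty_conv nth_default_def)
    then show ?thesis by simp
  qed
qed

lemma schroeder_col_le_Suc_col:
  assumes "schroeder lam" "odd j"
  shows "col lam j \<le> Suc (col lam (Suc j))"
  using assms col_eq_col_Suc_plus_count[of lam j] unfolding schroeder_def by fastforce

text \<open>\<open>pair_col lam i\<close> is part number \<open>i + 1\<close> of \<open>c_2(lam)\<close> before zero parts are dropped.\<close>

definition pair_col :: "nat list \<Rightarrow> nat \<Rightarrow> nat" where
  "pair_col lam i = col lam (2 * i + 1) + col lam (2 * i + 2)"

lemma cn_2_eq: "cn 2 lam = filter (\<lambda>x. 0 < x) (map (pair_col lam) [0..<sum_list lam])"
proof -
  have "[1..<Suc (sum_list lam)] = map Suc [0..<sum_list lam]"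
    by (simp only: map_Suc_upt One_nat_def)
  moreover have "{(Suc i - 1) * 2 + 1 .. Suc i * 2} = {2 * i + 1, 2 * i + 2}" for i
    by auto
  ultimately show ?thesis
    unfolding cn_def pair_col_def by (simp add: comp_def)
qed

lemma pair_col_eq_0: "sum_list lam \<le> i \<Longrightarrow> pair_col lam i = 0"
  unfolding pair_col_def by (simp add: col_eq_0_beyond_sum)

lemma col_cn_2:
  assumes "0 < j"
  shows "col (cn 2 lam) j = card {i. j \<le> pair_col lam i}"
proof -
  let ?is = "filter (\<lambda>i. j \<le> pair_col lam i) [0..<sum_list lam]"
  have "col (cn 2 lam) j = length ?is"
    unfolding cn_2_eq col_def using assms
    by (auto simp: filter_map comp_def intro!: arg_cong[where f = length] filter_cong)
  also have "\<dots> = card (set ?is)"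
    by (rule distinct_card[symmetric]) simp
  also have "set ?is = {i. j \<le> pair_col lam i}"
  proof -
    have "i < sum_list lam" if "j \<le> pair_col lam i" for i
      using assms that pair_col_eq_0[of lam i] by linarith
    then show ?thesis by auto
  qed
  finally show ?thesis .
qed

lemma le_pair_col_iff:
  assumes "sorted_wrt (\<ge>) lam" "schroeder lam"
  shows "2 * k + 1 \<le> pair_col lam i \<longleftrightarrow> 2 * i + 1 \<le> nth_default 0 lam k"
    and "2 * k + 2 \<le> pair_col lam i \<longleftrightarrow> 2 * i + 2 \<le> nth_default 0 lam k"
proof -
  let ?a = "col lam (2 * i + 1)" and ?b = "col lam (2 * i + 2)"
  have "?b \<le> ?a" by (rule col_antimono) simp
  moreover have "?a \<le> Suc ?b"
    using schroeder_col_le_Suc_col[OF assms(2), of "2 * i + 1"] by simp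
  ultimately have "2 * k + 1 \<le> ?a + ?b \<longleftrightarrow> k < ?a" "2 * k + 2 \<le> ?a + ?b \<longleftrightarrow> k < ?b"
    by linarith+
  then show "2 * k + 1 \<le> pair_col lam i \<longleftrightarrow> 2 * i + 1 \<le> nth_default 0 lam k"
    and "2 * k + 2 \<le> pair_col lam i \<longleftrightarrow> 2 * i + 2 \<le> nth_default 0 lam k"
    unfolding pair_col_def by (simp_all add: less_col_iff[OF assms(1)])
qed

lemma card_odd_le_plus_card_even_le: "card {i. 2 * i + 1 \<le> x} + card {i. 2 * i + 2 \<le> x} = (x :: nat)"
proof -
  have "{i. 2 * i + 1 \<le> x} = {..<(x + 1) div 2}" "{i. 2 * i + 2 \<le> x} = {..<x div 2}"
    by auto
  then show ?thesis by simp
qed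

lemma pair_col_cn_2:
  assumes "sorted_wrt (\<ge>) lam" "schroeder lam"
  shows "pair_col (cn 2 lam) k = nth_default 0 lam k"
proof -
  have "pair_col (cn 2 lam) k
      = card {i. 2 * k + 1 \<le> pair_col lam i} + card {i. 2 * k + 2 \<le> pair_col lam i}"
    unfolding pair_col_def[of "cn 2 lam"] by (simp add: col_cn_2)
  also have "\<dots> = card {i. 2 * i + 1 \<le> nth_default 0 lam k} + card {i. 2 * i + 2 \<le> nth_default 0 lam k}"
    by (simp only: le_pair_col_iff[OF assms])
  also have "\<dots> = nth_default 0 lam k"
    by (rule card_odd_le_plus_card_even_le)
  finally show ?thesis .
qed

lemma map_nth_default_upt:
  "length xs \<le> n \<Longrightarrow> map (nth_default d xs) [0..<n] = xs @ replicate (n - length xs) d"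
  by (rule nth_equalityI) (auto simp: nth_append nth_default_def)

lemma cn_2_cn_2:
  assumes "is_partition lam" "schroeder lam"
  shows "cn 2 (cn 2 lam) = lam"
proof -
  have sorted: "sorted_wrt (\<ge>) lam" and pos: "\<forall>x\<in>set lam. 0 < x"
    using assms(1) unfolding is_partition_def by auto
  have pair_col: "pair_col (cn 2 lam) = nth_default 0 lam"
    using pair_col_cn_2[OF sorted assms(2)] by blast
  have "length lam \<le> sum_list (cn 2 lam)"
  proof (rule ccontr)
    let ?k = "sum_list (cn 2 lam)"
    assume "\<not> length lam \<le> ?k"
    then have "0 < nth_default 0 lam ?k"
      using pos by (simp add: nth_default_def)
    moreover have "pair_col (cn 2 lam) ?k = 0"
      by (rule pair_col_eq_0) simp
    ultimately show False
      using pair_col by simp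
  qed
  then have "cn 2 (cn 2 lam) = filter (\<lambda>x. 0 < x) (lam @ replicate (sum_list (cn 2 lam) - length lam) 0)"
    unfolding cn_2_eq[of "cn 2 lam"] pair_col by (simp add: map_nth_default_upt)
  also have "\<dots> = lam"
    using pos by simp
  finally show ?thesis .
qed

lemma even_pair_col_if_eq:
  assumes "a < b" "pair_col lam a = pair_col lam b"
  shows "even (pair_col lam a)"
proof -
  have "col lam (2 * b + 2) \<le> col lam (2 * b + 1)" "col lam (2 * b + 1) \<le> col lam (2 * a + 2)"
    "col lam (2 * a + 2) \<le> col lam (2 * a + 1)"
    using assms(1) by (simp_all add: col_antimono)
  then have "col lam (2 * a + 1) = col lam (2 * a + 2)"
    using assms(2) unfolding pair_col_def by linarith
  then show ?thesis
    unfolding pair_col_def by simp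
qed

lemma schroeder_cn_2: "schroeder (cn 2 lam)"
  unfolding schroeder_def
proof (intro allI impI)
  fix m :: nat
  assume "odd m"
  let ?is = "filter (\<lambda>i. m = pair_col lam i) [0..<sum_list lam]"
  have "count_list (cn 2 lam) m = length ?is"
    using \<open>odd m\<close> unfolding cn_2_eq count_list_eq_length_filter
    by (auto simp: filter_map filter_filter comp_def odd_pos intro!: arg_cong[where f = length] filter_cong)
  also have "\<dots> = card (set ?is)"
    by (rule distinct_card[symmetric]) simp
  also have "\<dots> \<le> 1"
  proof -
    have "a = b" if "a \<in> set ?is" "b \<in> set ?is" for a b
      using that \<open>odd m\<close> even_pair_col_if_eq[of a b lam] even_pair_col_if_eq[of b a lam]
      by (cases a b rule: linorder_cases) auto
    then show ?thesis
      using card_le_Suc0_iff_eq[of "set ?is"] by auto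
  qed
  finally show "count_list (cn 2 lam) m \<le> 1" .
qed

theorem mainTheorem3:
  shows "{lam. is_partition lam \<and> schroeder lam} = {lam. is_partition lam \<and> cn 2 (cn 2 lam) = lam}"
  using cn_2_cn_2 schroeder_cn_2[of "cn 2 _"] by metis

end
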